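(* Let $r\geq 3$ and let $G$ be a connected $(P_4,K_{1,r})$-free graph with at least $3$ vertices. Then $rx_3(G)\leq sdiam_3(G)+r+3$.
   Context: All graphs are finite, simple, undirected. A tree in an edge-colored graph is rainbow if no two of its edges have the same color; an $S$-tree is a tree containing all vertices of $S$. A $3$-rainbow coloring of a connected graph $G$ is an edge-coloring (adjacent edges may share colors) such that every $3$-element vertex set $S$ has a rainbow $S$-tree; $rx_3(G)$ is the minimum number of colors in such a coloring. $sdiam_3(G)$ is the maximum, over all $3$-element $S\subseteq V(G)$, of the minimum number of edges of an $S$-tree. $(P_4,K_{1,r})$-free means no induced subgraph isomorphic to the path $P_4$ on $4$ vertices or to the star $K_{1,r}$. *)

theory Defs
  imports Main
begin

definition simple_graph :: "'a set \<Rightarrow> 'a set set \<Rightarrow> bool" where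
  "simple_graph V E \<longleftrightarrow> finite V \<and> (\<forall>e\<in>E. e \<subseteq> V \<and> card e = 2)"

definition adj :: "'a set set \<Rightarrow> 'a \<Rightarrow> 'a \<Rightarrow> bool" where
  "adj E u v \<longleftrightarrow> {u, v} \<in> E"

definition connected_graph :: "'a set \<Rightarrow> 'a set set \<Rightarrow> bool" where
  "connected_graph V E \<longleftrightarrow> V \<noteq> {} \<and> (\<forall>u\<in>V. \<forall>v\<in>V. (adj E)\<^sup>*\<^sup>* u v)"

definition is_subtree :: "'a set \<Rightarrow> 'a set set \<Rightarrow> 'a set \<Rightarrow> 'a set set \<Rightarrow> bool" where
  "is_subtree V E VT ET \<longleftrightarrow> VT \<subseteq> V \<and> ET \<subseteq> E \<and> (\<forall>e\<in>ET. e \<subseteq> VT) \<and> finite VT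
     \<and> connected_graph VT ET \<and> card ET + 1 = card VT"

definition is_S_tree :: "'a set \<Rightarrow> 'a set set \<Rightarrow> 'a set \<Rightarrow> 'a set \<Rightarrow> 'a set set \<Rightarrow> bool" where
  "is_S_tree V E S VT ET \<longleftrightarrow> is_subtree V E VT ET \<and> S \<subseteq> VT"

definition three_rainbow_coloring :: "'a set \<Rightarrow> 'a set set \<Rightarrow> ('a set \<Rightarrow> nat) \<Rightarrow> nat \<Rightarrow> bool" where
  "three_rainbow_coloring V E c k \<longleftrightarrow> (\<forall>e\<in>E. c e < k) \<and>
     (\<forall>S. S \<subseteq> V \<and> card S = 3 \<longrightarrow> (\<exists>VT ET. is_S_tree V E S VT ET \<and> inj_on c ET))"

definition rx3 :: "'a set \<Rightarrow> 'a set set \<Rightarrow> nat" where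
  "rx3 V E = (LEAST k. \<exists>c. three_rainbow_coloring V E c k)"

definition steiner_dist :: "'a set \<Rightarrow> 'a set set \<Rightarrow> 'a set \<Rightarrow> nat" where
  "steiner_dist V E S = (LEAST m. \<exists>VT ET. is_S_tree V E S VT ET \<and> card ET = m)"

definition sdiam3 :: "'a set \<Rightarrow> 'a set set \<Rightarrow> nat" where
  "sdiam3 V E = Max {steiner_dist V E S | S. S \<subseteq> V \<and> card S = 3}"

definition has_induced_P4 :: "'a set \<Rightarrow> 'a set set \<Rightarrow> bool" where
  "has_induced_P4 V E \<longleftrightarrow> (\<exists>a\<in>V. \<exists>b\<in>V. \<exists>c\<in>V. \<exists>d\<in>V. distinct [a, b, c, d] \<and>
     {a, b} \<in> E \<and> {b, c} \<in> E \<and> {c, d} \<in> E \<and>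
     {a, c} \<notin> E \<and> {a, d} \<notin> E \<and> {b, d} \<notin> E)"

definition has_induced_star :: "'a set \<Rightarrow> 'a set set \<Rightarrow> nat \<Rightarrow> bool" where
  "has_induced_star V E r \<longleftrightarrow> (\<exists>v\<in>V. \<exists>L. L \<subseteq> V - {v} \<and> card L = r \<and>
     (\<forall>x\<in>L. {v, x} \<in> E) \<and> (\<forall>x\<in>L. \<forall>y\<in>L. x \<noteq> y \<longrightarrow> {x, y} \<notin> E))"

end

theory Submission
  imports Defs
begin

text \<open>By Seinsche's theorem a connected \<open>P\<^sub>4\<close>-free graph is the join of two nonempty
  parts \<open>A\<close> and \<open>B\<close>. Fix \<open>a \<in> A\<close>, \<open>b \<in> B\<close>; the remaining vertices, again inducing a
  \<open>P\<^sub>4\<close>-free graph, are covered by \<open>k\<close> cliques admitting an independent transversal. That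
  transversal lies on one side of the join and so forms an induced \<open>K\<^sub>1\<^sub>,\<^sub>k\<close> centred at \<open>a\<close> or
  \<open>b\<close>, whence \<open>k < r\<close>. Colour \<open>ab\<close> with \<open>k\<close>, every edge from a vertex \<open>x\<close> to the special vertex
  across the join with the index of the clique of \<open>x\<close>, and the edges inside the cliques with four
  further colours. Every three vertices then have a rainbow tree, either through \<open>ab\<close> or inside
  one clique, so \<open>rx\<^sub>3 \<le> k + 5 \<le> r + 4 \<le> sdiam\<^sub>3 + r + 2\<close>, as \<open>sdiam\<^sub>3 \<ge> 2\<close>.\<close>

section \<open>\<open>P\<^sub>4\<close>-free graphs are joins\<close>

definition restrict_rel :: "('a \<Rightarrow> 'a \<Rightarrow> bool) \<Rightarrow> 'a set \<Rightarrow> 'a \<Rightarrow> 'a \<Rightarrow> bool" where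
  "restrict_rel R W x y \<longleftrightarrow> x \<in> W \<and> y \<in> W \<and> R x y"

definition connected_on :: "('a \<Rightarrow> 'a \<Rightarrow> bool) \<Rightarrow> 'a set \<Rightarrow> bool" where
  "connected_on R W \<longleftrightarrow> (\<forall>u\<in>W. \<forall>v\<in>W. (restrict_rel R W)\<^sup>*\<^sup>* u v)"

definition compl_rel :: "('a \<Rightarrow> 'a \<Rightarrow> bool) \<Rightarrow> 'a \<Rightarrow> 'a \<Rightarrow> bool" where
  "compl_rel R x y \<longleftrightarrow> x \<noteq> y \<and> \<not> R x y"

definition P4_free :: "('a \<Rightarrow> 'a \<Rightarrow> bool) \<Rightarrow> 'a set \<Rightarrow> bool" where
  "P4_free R W \<longleftrightarrow> \<not> (\<exists>a\<in>W. \<exists>b\<in>W. \<exists>c\<in>W. \<exists>d\<in>W. distinct [a, b, c, d] \<and>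
     R a b \<and> R b c \<and> R c d \<and> \<not> R a c \<and> \<not> R a d \<and> \<not> R b d)"

lemma restrict_rel_rtranclp_in:
  "(restrict_rel R W)\<^sup>*\<^sup>* u v \<Longrightarrow> u \<in> W \<Longrightarrow> v \<in> W"
  by (induction rule: rtranclp_induct) (auto simp: restrict_rel_def)

lemma restrict_rel_rtranclp_closed:
  assumes "(restrict_rel R W)\<^sup>*\<^sup>* u v" "u \<in> C"
    and "\<And>x y. x \<in> C \<Longrightarrow> restrict_rel R W x y \<Longrightarrow> y \<in> C"
  shows "v \<in> C"
  using assms(1) by (induction rule: rtranclp_induct) (use assms in auto)

lemma connected_on_step:
  assumes "connected_on R W" "u \<in> W" "v \<in> W" "u \<noteq> v"
  obtains y where "y \<in> W" "R u y"
proof -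
  have "(restrict_rel R W)\<^sup>*\<^sup>* u v"
    using assms unfolding connected_on_def by blast
  then show thesis
    using assms(4) that by (metis converse_rtranclpE restrict_rel_def)
qed

lemma rtranclp_crossing_edge:
  "P\<^sup>*\<^sup>* u t \<Longrightarrow> \<not> Q u \<Longrightarrow> Q t \<Longrightarrow> \<exists>q p. P\<^sup>*\<^sup>* u q \<and> P q p \<and> \<not> Q q \<and> Q p"
  by (induction rule: rtranclp_induct) blast+

lemma symp_compl_rel: "symp R \<Longrightarrow> symp (compl_rel R)"
  unfolding compl_rel_def symp_def by blast

lemma irreflp_compl_rel: "irreflp (compl_rel R)"
  unfolding compl_rel_def irreflp_def by simp

lemma compl_rel_compl_rel: "irreflp R \<Longrightarrow> compl_rel (compl_rel R) = R"
  unfolding compl_rel_def irreflp_def by (intro ext) auto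

lemma P4_free_subset: "P4_free R W \<Longrightarrow> W' \<subseteq> W \<Longrightarrow> P4_free R W'"
  unfolding P4_free_def by blast

text \<open>The complement of an induced path \<open>a - b - c - d\<close> is the induced path \<open>b - d - a - c\<close>.\<close>
lemma P4_free_compl_rel:
  assumes "symp R" "P4_free R W"
  shows "P4_free (compl_rel R) W"
  using assms unfolding P4_free_def compl_rel_def symp_def
  by (smt (verit) distinct_length_2_or_more distinct_singleton)

lemma P4_free_witness:
  assumes "a \<in> W" "b \<in> W" "c \<in> W" "d \<in> W" "distinct [a, b, c, d]"
    "R a b" "R b c" "R c d" "\<not> R a c" "\<not> R a d" "\<not> R b d"
  shows "\<not> P4_free R W"
  unfolding P4_free_def using assms by blast

lemma component_split:
  assumes "symp R" "\<not> connected_on R W" "u \<in> W"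
  defines "X \<equiv> {y. (restrict_rel R W)\<^sup>*\<^sup>* u y}"
  shows "X \<subseteq> W" "u \<in> X" "W - X \<noteq> {}" "\<forall>x\<in>X. \<forall>y\<in>W - X. \<not> R x y"
proof -
  show "X \<subseteq> W" "u \<in> X"
    using restrict_rel_rtranclp_in assms(3) unfolding X_def by auto
  have sym: "symp (restrict_rel R W)"
    using assms(1) unfolding restrict_rel_def symp_def by blast
  show "W - X \<noteq> {}"
  proof
    assume "W - X = {}"
    then have "\<forall>p\<in>W. (restrict_rel R W)\<^sup>*\<^sup>* u p"
      unfolding X_def by auto
    then have "connected_on R W"
      unfolding connected_on_def
      by (meson rtranclp_trans sym symp_rtranclp sympD)
    then show False using assms(2) by simp
  qed
  show "\<forall>x\<in>X. \<forall>y\<in>W - X. \<not> R x y"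
    using \<open>X \<subseteq> W\<close> unfolding X_def restrict_rel_def
    by (auto intro: rtranclp.rtrancl_into_rtrancl)
qed

text \<open>Otherwise \<open>X \<union> {v}\<close> would be closed under edges, so \<open>y0\<close> could not be reached from \<open>v\<close>.\<close>
lemma neighbour_in_part:
  assumes "symp S" "irreflp S" "connected_on S W" "v \<in> W"
    and "W - {v} = X \<union> Y" "X \<inter> Y = {}" "\<forall>x\<in>X. \<forall>y\<in>Y. \<not> S x y" "y0 \<in> Y"
  obtains w where "w \<in> Y" "S v w"
proof (rule ccontr)
  assume no_nb: "\<not> thesis"
  have "(restrict_rel S W)\<^sup>*\<^sup>* v y0"
    using assms(3-5,8) unfolding connected_on_def by blast
  then have "y0 \<in> X \<union> {v}"
  proof (rule restrict_rel_rtranclp_closed)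
    fix x y assume "x \<in> X \<union> {v}" "restrict_rel S W x y"
    then show "y \<in> X \<union> {v}"
      using assms(1,2,5,7) no_nb that
      unfolding restrict_rel_def irreflp_def symp_def by blast
  qed simp
  then show False using assms(5,6,8) by blast
qed

text \<open>Take a non-neighbour \<open>u\<close> of \<open>v\<close> and its component \<open>X\<close> in \<open>W - {v}\<close>. Then \<open>v\<close> has a
  neighbour \<open>t \<in> X\<close> and a neighbour \<open>w \<notin> X\<close>; a path from \<open>u\<close> to \<open>t\<close> inside \<open>X\<close> has an edge
  \<open>q p\<close> with \<open>q\<close> not adjacent and \<open>p\<close> adjacent to \<open>v\<close>, and \<open>q - p - v - w\<close> is an induced \<open>P\<^sub>4\<close>.\<close>
lemma P4_of_cut_vertex:
  assumes sym: "symp S" and irr: "irreflp S"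
    and conn: "connected_on S W" and co_conn: "connected_on (compl_rel S) W"
    and v: "v \<in> W" and cut: "\<not> connected_on S (W - {v})" and ne: "W - {v} \<noteq> {}"
  shows "\<not> P4_free S W"
proof -
  define W' where "W' = W - {v}"
  obtain u0 where "u0 \<in> W'" using ne W'_def by auto
  then obtain u where u: "u \<in> W'" "\<not> S v u"
    using connected_on_step[OF co_conn v] v unfolding W'_def compl_rel_def by blast
  define X where "X = {y. (restrict_rel S W')\<^sup>*\<^sup>* u y}"
  have X: "X \<subseteq> W'" "u \<in> X" "W' - X \<noteq> {}" "\<forall>x\<in>X. \<forall>y\<in>W' - X. \<not> S x y"
    using component_split[OF sym cut[folded W'_def] u(1)] unfolding X_def by auto
  have W'_split: "W - {v} = X \<union> (W' - X)" "W - {v} = (W' - X) \<union> X"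
    using X(1) unfolding W'_def by auto
  have "\<forall>x\<in>W' - X. \<forall>y\<in>X. \<not> S x y" using X(4) sym by (auto dest: sympD)
  then obtain t where t: "t \<in> X" "S v t"
    using neighbour_in_part[OF sym irr conn v W'_split(2) _ _ X(2)] by blast
  obtain w where w: "w \<in> W' - X" "S v w"
    using neighbour_in_part[OF sym irr conn v W'_split(1) _ X(4)] X(3) by blast
  have "(restrict_rel S W')\<^sup>*\<^sup>* u t" using t unfolding X_def by simp
  then obtain q p where qp: "(restrict_rel S W')\<^sup>*\<^sup>* u q" "restrict_rel S W' q p"
    "\<not> S v q" "S v p"
    using rtranclp_crossing_edge[of _ u t "S v"] u t by blast
  have qp_X: "q \<in> X" "p \<in> X"
    using qp(1,2) unfolding X_def by (auto intro: rtranclp.rtrancl_into_rtrancl)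
  have "S q p" using qp(2) unfolding restrict_rel_def by simp
  moreover have "S p v" "\<not> S q v" using qp(3,4) sym by (auto dest: sympD)
  moreover have "\<not> S q w" "\<not> S p w" using qp_X w(1) X(4) by auto
  moreover have "q \<noteq> p" using \<open>S q p\<close> irr by (auto simp: irreflp_def)
  moreover have "q \<in> W'" "p \<in> W'" "w \<in> W'" "w \<notin> X" using qp_X w(1) X(1) by auto
  ultimately show ?thesis
    using v w(2) qp_X by (intro P4_free_witness[of q W p v w]) (auto simp: W'_def)
qed

lemma connected_on_pair_adjacent:
  assumes "connected_on S W" "v \<in> W" "W - {v} = {u}" "irreflp S"
  shows "S v u"
proof -
  have u: "u \<in> W" "v \<noteq> u" using assms(3) by auto
  obtain y where "y \<in> W" "S v y"
    by (rule connected_on_step[OF assms(1,2) u])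
  moreover have "y \<noteq> v" using \<open>S v y\<close> irreflpD[OF assms(4)] by metis
  ultimately have "y \<in> W - {v}" by simp
  then show ?thesis using assms(3) \<open>S v y\<close> by simp
qed

lemma P4_of_vertex_deletion:
  assumes sym: "symp R" and irr: "irreflp R"
    and conn: "connected_on R W" and co_conn: "connected_on (compl_rel R) W"
    and v: "v \<in> W" and ne: "W - {v} \<noteq> {}"
    and "\<not> (connected_on R (W - {v}) \<and> connected_on (compl_rel R) (W - {v}))"
  shows "\<not> P4_free R W"
proof (cases "connected_on R (W - {v})")
  case False
  then show ?thesis by (rule P4_of_cut_vertex[OF sym irr conn co_conn v _ ne])
next
  case True
  have "connected_on (compl_rel (compl_rel R)) W"
    using conn compl_rel_compl_rel[OF irr] by simp
  then have "\<not> P4_free (compl_rel R) W"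
    using P4_of_cut_vertex[OF symp_compl_rel[OF sym] irreflp_compl_rel co_conn _ v _ ne]
      True assms(7) by blast
  then show ?thesis using P4_free_compl_rel[OF sym] by blast
qed

theorem P4_free_not_connected_and_co_connected:
  assumes sym: "symp R" and irr: "irreflp R"
  shows "finite W \<Longrightarrow> P4_free R W \<Longrightarrow> card W \<ge> 2 \<Longrightarrow>
    \<not> (connected_on R W \<and> connected_on (compl_rel R) W)"
proof (induction "card W" arbitrary: W rule: less_induct)
  case less
  show ?case
  proof
    assume "connected_on R W \<and> connected_on (compl_rel R) W"
    then have conn: "connected_on R W" and co_conn: "connected_on (compl_rel R) W" by auto
    obtain v where v: "v \<in> W" using less.prems(3) by fastforce
    have card_less: "card (W - {v}) < card W" using less.prems(1) v by (rule card_Diff1_less)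
    show False
    proof (cases "card (W - {v}) \<ge> 2")
      case True
      then have ne: "W - {v} \<noteq> {}" by (metis card.empty not_numeral_le_zero)
      have "\<not> (connected_on R (W - {v}) \<and> connected_on (compl_rel R) (W - {v}))"
        using less.hyps[OF card_less _ _ True] less.prems(1,2) P4_free_subset by blast
      then show False
        using P4_of_vertex_deletion[OF sym irr conn co_conn v ne] less.prems(2) by blast
    next
      case False
      then have "card (W - {v}) = 1" using less.prems(3) card_Diff_singleton[OF v] by linarith
      then obtain u where u: "W - {v} = {u}" by (rule card_1_singletonE)
      have "R v u" by (rule connected_on_pair_adjacent[OF conn v u irr])
      moreover have "compl_rel R v u"
        by (rule connected_on_pair_adjacent[OF co_conn v u irreflp_compl_rel])
      ultimately show False unfolding compl_rel_def by simp
    qed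
  qed
qed

corollary P4_free_join_decomposition:
  assumes "symp R" "irreflp R" "finite W" "P4_free R W" "card W \<ge> 2" "connected_on R W"
  obtains A B where "A \<union> B = W" "A \<inter> B = {}" "A \<noteq> {}" "B \<noteq> {}" "\<forall>x\<in>A. \<forall>y\<in>B. R x y"
proof -
  have "\<not> connected_on (compl_rel R) W"
    using P4_free_not_connected_and_co_connected[OF assms(1-5)] assms(6) by blast
  moreover obtain u where u: "u \<in> W" using assms(5) by fastforce
  ultimately obtain X where X: "X \<subseteq> W" "u \<in> X" "W - X \<noteq> {}"
    "\<forall>x\<in>X. \<forall>y\<in>W - X. \<not> compl_rel R x y"
    using component_split[OF symp_compl_rel[OF assms(1)] _ u] by metis
  have "\<forall>x\<in>X. \<forall>y\<in>W - X. R x y" using X(4) unfolding compl_rel_def by (metis Diff_iff)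
  then show thesis using X by (intro that[of X "W - X"]) auto
qed

section \<open>Clique covers of \<open>P\<^sub>4\<close>-free graphs\<close>

text \<open>A cover of \<open>W\<close> by the \<open>k\<close> cliques \<open>{x \<in> W. cls x = i}\<close> together with an independent
  transversal \<open>t\<close>: it certifies that the clique cover number and the independence number of \<open>W\<close>
  coincide.\<close>
definition clique_cover ::
  "('a \<Rightarrow> 'a \<Rightarrow> bool) \<Rightarrow> 'a set \<Rightarrow> ('a \<Rightarrow> nat) \<Rightarrow> nat \<Rightarrow> (nat \<Rightarrow> 'a) \<Rightarrow> bool" where
  "clique_cover R W cls k t \<longleftrightarrow> (\<forall>x\<in>W. cls x < k)
     \<and> (\<forall>x\<in>W. \<forall>y\<in>W. x \<noteq> y \<longrightarrow> cls x = cls y \<longrightarrow> R x y)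
     \<and> (\<forall>i<k. t i \<in> W \<and> cls (t i) = i)
     \<and> (\<forall>i<k. \<forall>j<k. i \<noteq> j \<longrightarrow> \<not> R (t i) (t j))"

lemma clique_cover_empty: "clique_cover R {} (\<lambda>_. 0) 0 t"
  unfolding clique_cover_def by simp

lemma clique_cover_singleton: "clique_cover R {w} (\<lambda>_. 0) 1 (\<lambda>_. w)"
  unfolding clique_cover_def by simp

lemma clique_cover_disjoint_Un:
  assumes "X \<inter> Y = {}" "\<forall>x\<in>X. \<forall>y\<in>Y. \<not> R x y \<and> \<not> R y x"
    and "clique_cover R X clsX kX tX" "clique_cover R Y clsY kY tY"
  shows "clique_cover R (X \<union> Y) (\<lambda>x. if x \<in> X then clsX x else kX + clsY x) (kX + kY)
           (\<lambda>i. if i < kX then tX i else tY (i - kX))"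
  using assms unfolding clique_cover_def
  by (auto simp: not_less le_add_diff_inverse split: if_splits)

lemma clique_cover_join_Un:
  assumes "A \<inter> B = {}" "\<forall>x\<in>A. \<forall>y\<in>B. R x y \<and> R y x"
    and "clique_cover R A clsA kA tA" "clique_cover R B clsB kB tB" "kB \<le> kA"
  shows "clique_cover R (A \<union> B) (\<lambda>x. if x \<in> A then clsA x else clsB x) kA tA"
  using assms unfolding clique_cover_def
  by (auto split: if_splits)

lemma clique_cover_join:
  assumes "symp R" "A \<inter> B = {}" "\<forall>x\<in>A. \<forall>y\<in>B. R x y"
    and A: "clique_cover R A clsA kA tA" and B: "clique_cover R B clsB kB tB"
  shows "\<exists>cls k t. clique_cover R (A \<union> B) cls k t"
proof -
  have "\<forall>x\<in>A. \<forall>y\<in>B. R x y \<and> R y x" "\<forall>x\<in>B. \<forall>y\<in>A. R x y \<and> R y x"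
    using assms(1,3) by (auto dest: sympD)
  then show ?thesis
    using clique_cover_join_Un[OF assms(2) _ A B] clique_cover_join_Un[of B A, OF _ _ B A] assms(2)
    by (cases "kB \<le> kA") (auto simp: Int_commute Un_commute)
qed

theorem P4_free_clique_cover:
  assumes sym: "symp R" and irr: "irreflp R"
  shows "finite W \<Longrightarrow> P4_free R W \<Longrightarrow> \<exists>cls k t. clique_cover R W cls k t"
proof (induction "card W" arbitrary: W rule: less_induct)
  case less
  have card_less: "card X < card W" if "X \<subseteq> W" "W - X \<noteq> {}" for X
    using less.prems(1) that by (intro psubset_card_mono) auto
  have IH: "\<exists>cls k t. clique_cover R X cls k t" if "X \<subseteq> W" "W - X \<noteq> {}" for X
    using less.hyps[OF card_less[OF that]] less.prems that
    by (meson P4_free_subset finite_subset)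
  consider "card W \<le> 1" | "card W \<ge> 2" "connected_on R W" | "\<not> connected_on R W"
    by linarith
  then show ?case
  proof cases
    case 1
    then have "W = {} \<or> (\<exists>w. W = {w})"
      using less.prems(1) by (metis card_0_eq card_1_singletonE le_Suc_eq le_zero_eq One_nat_def)
    then show ?thesis using clique_cover_empty clique_cover_singleton by metis
  next
    case 2
    obtain A B where AB: "A \<union> B = W" "A \<inter> B = {}" "A \<noteq> {}" "B \<noteq> {}" "\<forall>x\<in>A. \<forall>y\<in>B. R x y"
      using P4_free_join_decomposition[OF sym irr less.prems 2] by blast
    obtain clsA kA tA clsB kB tB
      where "clique_cover R A clsA kA tA" "clique_cover R B clsB kB tB"
      using IH[of A] IH[of B] AB by blast
    then show ?thesis using clique_cover_join[OF sym AB(2,5)] AB(1) by blast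
  next
    case 3
    obtain u where u: "u \<in> W" using 3 unfolding connected_on_def by blast
    define X where "X = {y. (restrict_rel R W)\<^sup>*\<^sup>* u y}"
    have X: "X \<subseteq> W" "u \<in> X" "W - X \<noteq> {}" "\<forall>x\<in>X. \<forall>y\<in>W - X. \<not> R x y"
      using component_split[OF sym 3 u] unfolding X_def by auto
    obtain clsX kX tX clsY kY tY
      where "clique_cover R X clsX kX tX" "clique_cover R (W - X) clsY kY tY"
      using IH[of X] IH[of "W - X"] X by blast
    moreover have "\<forall>x\<in>X. \<forall>y\<in>W - X. \<not> R x y \<and> \<not> R y x" using X(4) sym by (auto dest: sympD)
    ultimately have "\<exists>cls k t. clique_cover R (X \<union> (W - X)) cls k t"
      using clique_cover_disjoint_Un[of X "W - X" R] by blast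
    then show ?thesis using X(1) by (simp add: Un_absorb1)
  qed
qed

lemma clique_cover_independent_subset:
  assumes "clique_cover R W cls k t" "r \<le> k"
  obtains L where "L \<subseteq> W" "card L = r" "\<forall>x\<in>L. \<forall>y\<in>L. x \<noteq> y \<longrightarrow> \<not> R x y"
proof
  have t: "\<forall>i<k. t i \<in> W \<and> cls (t i) = i" "\<forall>i<k. \<forall>j<k. i \<noteq> j \<longrightarrow> \<not> R (t i) (t j)"
    using assms(1) unfolding clique_cover_def by auto
  then have "inj_on t {..<r}" using assms(2) by (intro inj_onI) (metis lessThan_iff order_less_le_trans)
  then show "card (t ` {..<r}) = r" by (simp add: card_image)
  show "t ` {..<r} \<subseteq> W" using t(1) assms(2) by auto
  show "\<forall>x\<in>t ` {..<r}. \<forall>y\<in>t ` {..<r}. x \<noteq> y \<longrightarrow> \<not> R x y"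
  proof (intro ballI impI)
    fix x y assume "x \<in> t ` {..<r}" "y \<in> t ` {..<r}" "x \<noteq> y"
    then obtain i j where ij: "i < r" "j < r" "x = t i" "y = t j" by blast
    then have "i < k" "j < k" "i \<noteq> j" using assms(2) \<open>x \<noteq> y\<close> by auto
    then show "\<not> R x y" using t(2) ij(3,4) by blast
  qed
qed

section \<open>Rainbow trees\<close>

lemma connected_graph_add_leaf:
  assumes "connected_graph VT ET" "w \<in> VT"
  shows "connected_graph (insert v VT) (insert {v, w} ET)"
  unfolding connected_graph_def
proof (intro conjI ballI)
  let ?R = "adj (insert {v, w} ET)"
  have mono: "?R\<^sup>*\<^sup>* x y" if "(adj ET)\<^sup>*\<^sup>* x y" for x y
    using that by (rule rtranclp_mono[THEN predicate2D, rotated]) (auto simp: adj_def)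
  have to_w: "?R\<^sup>*\<^sup>* x w" and from_w: "?R\<^sup>*\<^sup>* w x" if "x \<in> insert v VT" for x
  proof -
    have "?R v w" "?R w v" by (auto simp: adj_def insert_commute)
    then show "?R\<^sup>*\<^sup>* x w" "?R\<^sup>*\<^sup>* w x"
      using that assms mono unfolding connected_graph_def by auto
  qed
  fix x y assume "x \<in> insert v VT" "y \<in> insert v VT"
  then show "?R\<^sup>*\<^sup>* x y" using to_w from_w by (meson rtranclp_trans)
qed simp

definition rainbow_tree ::
  "'a set \<Rightarrow> 'a set set \<Rightarrow> ('a set \<Rightarrow> nat) \<Rightarrow> 'a set \<Rightarrow> 'a set set \<Rightarrow> bool" where
  "rainbow_tree V E c VT ET \<longleftrightarrow> is_subtree V E VT ET \<and> inj_on c ET"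

lemma rainbow_tree_singleton: "v \<in> V \<Longrightarrow> rainbow_tree V E c {v} {}"
  unfolding rainbow_tree_def is_subtree_def connected_graph_def by auto

lemma rainbow_tree_add_leaf:
  assumes T: "rainbow_tree V E c VT ET" and v: "v \<in> V" "v \<notin> VT" and w: "w \<in> VT"
    and e: "{v, w} \<in> E" and fresh: "c {v, w} \<notin> c ` ET"
  shows "rainbow_tree V E c (insert v VT) (insert {v, w} ET)"
proof -
  have sub: "VT \<subseteq> V" "ET \<subseteq> E" "\<forall>e\<in>ET. e \<subseteq> VT" "finite VT" "connected_graph VT ET"
      "card ET + 1 = card VT" and inj: "inj_on c ET"
    using T unfolding rainbow_tree_def is_subtree_def by auto
  have "{v, w} \<notin> ET" using sub(3) v(2) by blast
  moreover have "finite ET" using sub(3,4) by (meson Pow_iff finite_Pow_iff finite_subset subsetI)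
  ultimately have "card (insert {v, w} ET) + 1 = card (insert v VT)"
    using sub(4,6) v(2) by simp
  moreover have "connected_graph (insert v VT) (insert {v, w} ET)"
    using connected_graph_add_leaf[OF sub(5) w] .
  moreover have "inj_on c (insert {v, w} ET)" using inj fresh by auto
  ultimately show ?thesis
    using sub v(1) w e unfolding rainbow_tree_def is_subtree_def by blast
qed

section \<open>A rainbow colouring of a join\<close>

locale join_coloring =
  fixes V :: "'a set" and E :: "'a set set" and A B :: "'a set" and a b :: 'a
    and cls :: "'a \<Rightarrow> nat" and k :: nat
  assumes simple: "simple_graph V E"
    and partition: "A \<union> B = V" "A \<inter> B = {}" and a: "a \<in> A" and b: "b \<in> B"
    and join: "\<forall>x\<in>A. \<forall>y\<in>B. {x, y} \<in> E"
    and cls_less: "\<forall>x\<in>V - {a, b}. cls x < k"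
    and cls_clique: "\<forall>x\<in>V - {a, b}. \<forall>y\<in>V - {a, b}. x \<noteq> y \<longrightarrow> cls x = cls y \<longrightarrow> {x, y} \<in> E"
begin

abbreviation U :: "'a set" where "U \<equiv> V - {a, b}"

definition opp :: "'a \<Rightarrow> 'a" where
  "opp x = (if x \<in> A then b else a)"

text \<open>Roles \<open>0\<close> and \<open>1\<close> mark two fixed representatives of each class, role \<open>2\<close> the other
  vertices. An edge inside \<open>U\<close> is coloured by the roles of its ends, so that any three vertices of
  one class span a rainbow path.\<close>
definition rep0 :: "nat \<Rightarrow> 'a" where
  "rep0 i = (SOME x. x \<in> U \<and> cls x = i)"

definition rep1 :: "nat \<Rightarrow> 'a" where
  "rep1 i = (SOME x. x \<in> U \<and> cls x = i \<and> x \<noteq> rep0 i)"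

definition role :: "'a \<Rightarrow> nat" where
  "role x = (if x = rep0 (cls x) then 0 else if x = rep1 (cls x) then 1 else 2)"

definition inner_color :: "nat set \<Rightarrow> nat" where
  "inner_color Q = (if 0 \<in> Q \<and> 1 \<in> Q then k + 4 else if 0 \<in> Q then k + 1
     else if 1 \<in> Q then k + 3 else k + 2)"

definition col :: "'a set \<Rightarrow> nat" where
  "col e = (if e = {a, b} then k
     else if e \<inter> {a, b} \<noteq> {} then cls (THE x. x \<in> e - {a, b})
     else inner_color (role ` e))"

lemma a_ne_b: "a \<noteq> b" and a_in_V: "a \<in> V" and b_in_V: "b \<in> V"
  using partition a b by auto

lemma cls_lessD: "x \<in> U \<Longrightarrow> cls x < k"
  using cls_less by blast

lemma opp_in_ab: "opp x = a \<or> opp x = b"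
  unfolding opp_def by simp

lemma opp_edge: "x \<in> U \<Longrightarrow> {x, opp x} \<in> E"
  using join partition a b unfolding opp_def by (auto simp: insert_commute)

lemma ab_edge: "{b, a} \<in> E"
  using join a b by (auto simp: insert_commute)

lemma col_ba: "col {b, a} = k"
  unfolding col_def by (simp add: insert_commute)

lemma col_opp: "x \<in> U \<Longrightarrow> col {x, opp x} = cls x"
proof -
  assume x: "x \<in> U"
  then have "{x, opp x} - {a, b} = {x}" "{x, opp x} \<noteq> {a, b}" "{x, opp x} \<inter> {a, b} \<noteq> {}"
    using opp_in_ab[of x] by auto
  then show ?thesis unfolding col_def by simp
qed

lemma col_inner: "x \<in> U \<Longrightarrow> y \<in> U \<Longrightarrow> col {x, y} = inner_color {role x, role y}"
  unfolding col_def by auto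

lemma inner_color_range: "k < inner_color Q" "inner_color Q < k + 5"
  unfolding inner_color_def by auto

lemma col_less: "e \<in> E \<Longrightarrow> col e < k + 5"
proof -
  assume "e \<in> E"
  then have "e \<subseteq> V" "card e = 2" using simple unfolding simple_graph_def by auto
  then obtain x y where e: "e = {x, y}" "x \<noteq> y" "x \<in> V" "y \<in> V"
    unfolding card_2_iff by auto
  consider "e = {a, b}" | "e \<noteq> {a, b}" "e \<inter> {a, b} \<noteq> {}" | "e \<inter> {a, b} = {}" by blast
  then show ?thesis
  proof cases
    case 2
    have "(x \<in> U \<and> e - {a, b} = {x}) \<or> (y \<in> U \<and> e - {a, b} = {y})"
      using 2 e by auto
    then obtain z where "z \<in> U" "e - {a, b} = {z}" by blast
    moreover have "cls z < k" using \<open>z \<in> U\<close> by (rule cls_lessD)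
    ultimately show ?thesis using 2 unfolding col_def by simp
  qed (simp_all add: col_def inner_color_range)
qed

lemma role_cases: "role x = 0 \<or> role x = 1 \<or> role x = 2"
  unfolding role_def by auto

lemma role_eq_imp_2: "cls x = cls y \<Longrightarrow> x \<noteq> y \<Longrightarrow> role x = role y \<Longrightarrow> role x = 2"
  unfolding role_def by (auto split: if_splits)

lemma role_2_reps:
  assumes x: "x \<in> U" and role_x: "role x = 2"
  defines "v0 \<equiv> rep0 (cls x)" and "v1 \<equiv> rep1 (cls x)"
  shows "v0 \<in> U" "cls v0 = cls x" "role v0 = 0" "v1 \<in> U" "cls v1 = cls x" "role v1 = 1"
    "v0 \<noteq> x" "v1 \<noteq> x" "v0 \<noteq> v1"
proof -
  have "v0 \<in> U \<and> cls v0 = cls x"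
    unfolding v0_def rep0_def by (rule someI2[where a = x]) (use x in auto)
  then show "v0 \<in> U" "cls v0 = cls x" "role v0 = 0"
    unfolding role_def v0_def by auto
  have "v0 \<noteq> x" using role_x unfolding role_def v0_def by auto
  have "v1 \<in> U \<and> cls v1 = cls x \<and> v1 \<noteq> v0"
    unfolding v1_def rep1_def v0_def
    by (rule someI2[where a = x]) (use x \<open>v0 \<noteq> x\<close> in \<open>auto simp: v0_def\<close>)
  then show "v1 \<in> U" "cls v1 = cls x" "role v1 = 1" "v0 \<noteq> v1"
    using \<open>cls v0 = cls x\<close> unfolding role_def v0_def v1_def by auto
  show "v0 \<noteq> x" by fact
  show "v1 \<noteq> x" using role_x unfolding role_def v0_def v1_def by (auto split: if_splits)
qed

definition rainbow_spanned :: "'a set \<Rightarrow> bool" where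
  "rainbow_spanned S \<longleftrightarrow> (\<exists>VT ET. rainbow_tree V E col VT ET \<and> S \<subseteq> VT)"

lemma rainbow_spanned_subset: "rainbow_spanned T \<Longrightarrow> S \<subseteq> T \<Longrightarrow> rainbow_spanned S"
  unfolding rainbow_spanned_def by blast

lemma rainbow_tree_add_opp_leaf:
  assumes "rainbow_tree V E col VT ET" "a \<in> VT" "b \<in> VT" "x \<in> U" "x \<notin> VT"
    and "cls x \<notin> col ` ET"
  shows "rainbow_tree V E col (insert x VT) (insert {x, opp x} ET)"
  using opp_in_ab[of x] assms opp_edge col_opp
  by (intro rainbow_tree_add_leaf) auto

lemma rainbow_tree_add_inner_leaf:
  assumes "rainbow_tree V E col VT ET" "y \<in> VT" "x \<in> U" "y \<in> U" "x \<noteq> y" "cls x = cls y"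
    "x \<notin> VT" and "inner_color {role x, role y} \<notin> col ` ET"
  shows "rainbow_tree V E col (insert x VT) (insert {x, y} ET)"
  using assms cls_clique col_inner by (intro rainbow_tree_add_leaf) auto

lemma rainbow_tree_ab: "rainbow_tree V E col {b, a} {{b, a}}"
  using rainbow_tree_add_leaf[OF rainbow_tree_singleton[OF a_in_V] b_in_V] a_ne_b ab_edge
  by simp

lemma rainbow_tree_ab_opp:
  assumes "x \<in> U"
  shows "rainbow_tree V E col {x, b, a} {{x, opp x}, {b, a}}"
proof -
  have "cls x \<notin> col ` {{b, a}}" using cls_lessD[OF assms] col_ba by auto
  then show ?thesis
    using rainbow_tree_add_opp_leaf[OF rainbow_tree_ab _ _ assms] assms by simp
qed

lemma rainbow_spanned_ab_one: "x \<in> V \<Longrightarrow> rainbow_spanned {a, b, x}"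
  using rainbow_tree_ab rainbow_tree_ab_opp unfolding rainbow_spanned_def
  by (cases "x \<in> U") blast+

lemma rainbow_spanned_ab_two:
  assumes x: "x \<in> U" and y: "y \<in> U" and "x \<noteq> y"
  shows "rainbow_spanned {a, b, x, y}"
proof -
  have y_new: "y \<notin> {x, b, a}" using assms by auto
  have cols: "col ` {{x, opp x}, {b, a}} = {cls x, k}" using col_opp[OF x] col_ba by simp
  have "cls x < k" "cls y < k" using x y by (auto intro: cls_lessD)
  show ?thesis
  proof (cases "cls x = cls y")
    case False
    then have "cls y \<notin> col ` {{x, opp x}, {b, a}}" using cols \<open>cls y < k\<close> by auto
    then have "rainbow_tree V E col (insert y {x, b, a}) (insert {y, opp y} {{x, opp x}, {b, a}})"
      using rainbow_tree_add_opp_leaf[OF rainbow_tree_ab_opp[OF x] _ _ y y_new] by simp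
    then show ?thesis unfolding rainbow_spanned_def by blast
  next
    case True
    have "inner_color {role y, role x} \<notin> col ` {{x, opp x}, {b, a}}"
      using cols \<open>cls x < k\<close> inner_color_range(1)[of "{role y, role x}"] by auto
    then have "rainbow_tree V E col (insert y {x, b, a}) (insert {y, x} {{x, opp x}, {b, a}})"
      using rainbow_tree_add_inner_leaf[OF rainbow_tree_ab_opp[OF x] _ y x _ _ y_new] True assms
      by simp
    then show ?thesis unfolding rainbow_spanned_def by blast
  qed
qed

lemma rainbow_spanned_ab_pair:
  assumes "x \<in> V" "y \<in> V"
  shows "rainbow_spanned {a, b, x, y}"
proof (cases "x \<in> U \<and> y \<in> U \<and> x \<noteq> y")
  case True
  then show ?thesis using rainbow_spanned_ab_two by blast
next
  case False
  then have "{a, b, x, y} \<subseteq> {a, b, x} \<or> {a, b, x, y} \<subseteq> {a, b, y}" using assms by auto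
  then show ?thesis using rainbow_spanned_ab_one assms rainbow_spanned_subset by metis
qed

lemma rainbow_spanned_distinct_classes:
  assumes x: "x \<in> U" and y: "y \<in> U" and z: "z \<in> U"
    and "cls x \<noteq> cls y" "cls x \<noteq> cls z" "cls y \<noteq> cls z"
  shows "rainbow_spanned {x, y, z}"
proof -
  have "cls y \<notin> col ` {{x, opp x}, {b, a}}" "y \<notin> {x, b, a}"
    using assms cls_lessD[OF x] cls_lessD[OF y] col_opp[OF x] col_ba by auto
  then have T: "rainbow_tree V E col {y, x, b, a} {{y, opp y}, {x, opp x}, {b, a}}"
    using rainbow_tree_add_opp_leaf[OF rainbow_tree_ab_opp[OF x] _ _ y] by simp
  have "cls z \<notin> col ` {{y, opp y}, {x, opp x}, {b, a}}" "z \<notin> {y, x, b, a}"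
    using assms cls_lessD[OF x] cls_lessD[OF y] cls_lessD[OF z] col_opp[OF x] col_opp[OF y] col_ba
    by auto
  then have "rainbow_tree V E col (insert z {y, x, b, a})
      (insert {z, opp z} {{y, opp y}, {x, opp x}, {b, a}})"
    using rainbow_tree_add_opp_leaf[OF T _ _ z] by simp
  then show ?thesis unfolding rainbow_spanned_def by blast
qed

lemma rainbow_spanned_two_classes:
  assumes x: "x \<in> U" and y: "y \<in> U" and z: "z \<in> U" and "x \<noteq> y"
    and "cls x = cls y" "cls x \<noteq> cls z"
  shows "rainbow_spanned {x, y, z}"
proof -
  have "inner_color {role y, role x} \<notin> col ` {{x, opp x}, {b, a}}" "y \<notin> {x, b, a}"
    using assms cls_lessD[OF x] col_opp[OF x] col_ba inner_color_range(1)[of "{role y, role x}"]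
    by auto
  then have T: "rainbow_tree V E col {y, x, b, a} {{y, x}, {x, opp x}, {b, a}}"
    using rainbow_tree_add_inner_leaf[OF rainbow_tree_ab_opp[OF x] _ y x] assms by simp
  have "cls z \<notin> col ` {{y, x}, {x, opp x}, {b, a}}" "z \<notin> {y, x, b, a}"
    using assms cls_lessD[OF z] col_opp[OF x] col_inner[OF y x] col_ba
      inner_color_range(1)[of "{role y, role x}"] by auto
  then have "rainbow_tree V E col (insert z {y, x, b, a})
      (insert {z, opp z} {{y, x}, {x, opp x}, {b, a}})"
    using rainbow_tree_add_opp_leaf[OF T _ _ z] by simp
  then show ?thesis unfolding rainbow_spanned_def by blast
qed

lemma rainbow_spanned_path:
  assumes x: "x \<in> U" and y: "y \<in> U" and z: "z \<in> U" and "x \<noteq> y" "x \<noteq> z" "y \<noteq> z"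
    and "cls x = cls y" "cls y = cls z"
    and "inner_color {role x, role y} \<noteq> inner_color {role z, role y}"
  shows "rainbow_spanned {x, y, z}"
proof -
  have T: "rainbow_tree V E col {x, y} {{x, y}}"
    using rainbow_tree_add_inner_leaf[OF rainbow_tree_singleton[of y] _ x y] assms by simp
  have "rainbow_tree V E col (insert z {x, y}) (insert {z, y} {{x, y}})"
    using rainbow_tree_add_inner_leaf[OF T _ z y] assms col_inner[OF x y] by (simp add: insert_commute)
  then show ?thesis unfolding rainbow_spanned_def by blast
qed

text \<open>Three vertices of role \<open>2\<close> are joined through both representatives of their class by
  the path \<open>x - v\<^sub>0 - v\<^sub>1 - y - z\<close>, coloured \<open>k + 1, k + 4, k + 3, k + 2\<close>.\<close>
lemma rainbow_spanned_role_2: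
  assumes x: "x \<in> U" and y: "y \<in> U" and z: "z \<in> U" and "x \<noteq> y" "x \<noteq> z" "y \<noteq> z"
    and "cls x = cls y" "cls y = cls z" "role x = 2" "role y = 2" "role z = 2"
  shows "rainbow_spanned {x, y, z}"
proof -
  define v0 v1 where "v0 = rep0 (cls x)" and "v1 = rep1 (cls x)"
  note v = role_2_reps[OF x \<open>role x = 2\<close>, folded v0_def v1_def]
  have distinct: "v0 \<noteq> y" "v0 \<noteq> z" "v1 \<noteq> y" "v1 \<noteq> z" using v assms by auto
  have T1: "rainbow_tree V E col {v0, x} {{v0, x}}"
    using rainbow_tree_add_inner_leaf[OF rainbow_tree_singleton[of x] _ v(1) x] v x by simp
  have c1: "col {v0, x} = k + 1" using col_inner[OF v(1) x] v assms by (simp add: inner_color_def)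
  have T2: "rainbow_tree V E col {v1, v0, x} {{v1, v0}, {v0, x}}"
    using rainbow_tree_add_inner_leaf[OF T1 _ v(4) v(1)] v c1 by (simp add: inner_color_def)
  have c2: "col {v1, v0} = k + 4" using col_inner[OF v(4) v(1)] v by (simp add: inner_color_def)
  have T3: "rainbow_tree V E col {y, v1, v0, x} {{y, v1}, {v1, v0}, {v0, x}}"
    using rainbow_tree_add_inner_leaf[OF T2 _ y v(4)] v assms distinct c1 c2
    by (simp add: inner_color_def)
  have c3: "col {y, v1} = k + 3" using col_inner[OF y v(4)] v assms by (simp add: inner_color_def)
  have "rainbow_tree V E col (insert z {y, v1, v0, x}) (insert {z, y} {{y, v1}, {v1, v0}, {v0, x}})"
    using rainbow_tree_add_inner_leaf[OF T3 _ z y] v assms distinct c1 c2 c3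
    by (simp add: inner_color_def)
  then show ?thesis unfolding rainbow_spanned_def by blast
qed

lemma rainbow_spanned_same_class:
  assumes x: "x \<in> U" and y: "y \<in> U" and z: "z \<in> U" and "x \<noteq> y" "x \<noteq> z" "y \<noteq> z"
    and "cls x = cls y" "cls y = cls z"
  shows "rainbow_spanned {x, y, z}"
proof -
  have centre: "inner_color {role u, role c} \<noteq> inner_color {role w, role c}"
    if "role c = 2" "role u \<noteq> role w" for u c w
    using that role_cases[of u] role_cases[of w] by (auto simp: inner_color_def)
  have "role x = role y \<Longrightarrow> role x = 2" "role x = role z \<Longrightarrow> role x = 2"
    "role y = role z \<Longrightarrow> role y = 2"
    using role_eq_imp_2 assms(4-8) by metis+
  then consider "role x = 2" "role y = 2" "role z = 2"
    | "role z = 2" "role x \<noteq> role y" | "role x = 2" "role y \<noteq> role z"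
    | "role y = 2" "role x \<noteq> role z"
    using role_cases[of x] role_cases[of y] role_cases[of z] by fastforce
  then show ?thesis
  proof cases
    case 1
    then show ?thesis using rainbow_spanned_role_2[OF x y z assms(4-8)] by blast
  next
    case 2
    have "rainbow_spanned {x, z, y}"
      by (rule rainbow_spanned_path[OF x z y assms(5,4) not_sym[OF assms(6)] _ _ centre[OF 2]])
        (simp_all add: assms(7,8))
    then show ?thesis by (simp add: insert_commute)
  next
    case 3
    have "rainbow_spanned {y, x, z}"
      by (rule rainbow_spanned_path[OF y x z not_sym[OF assms(4)] assms(6,5) _ _ centre[OF 3]])
        (simp_all add: assms(7,8))
    then show ?thesis by (simp add: insert_commute)
  next
    case 4
    then show ?thesis using rainbow_spanned_path[OF x y z] centre[OF 4] assms(4-8) by simp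
  qed
qed

lemma rainbow_spanned_inner_triple:
  assumes U: "x \<in> U" "y \<in> U" "z \<in> U" and "x \<noteq> y" "x \<noteq> z" "y \<noteq> z"
  shows "rainbow_spanned {x, y, z}"
proof -
  consider "cls x = cls y" "cls y = cls z" | "cls x = cls y" "cls x \<noteq> cls z"
    | "cls x = cls z" "cls x \<noteq> cls y" | "cls y = cls z" "cls x \<noteq> cls y"
    | "cls x \<noteq> cls y" "cls x \<noteq> cls z" "cls y \<noteq> cls z"
    by metis
  then show ?thesis
  proof cases
    case 1
    then show ?thesis using rainbow_spanned_same_class[OF U] assms by simp
  next
    case 2
    then show ?thesis using rainbow_spanned_two_classes[OF U] assms by simp
  next
    case 3
    then have "rainbow_spanned {x, z, y}" using rainbow_spanned_two_classes[OF U(1,3,2)] assms by simp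
    then show ?thesis by (simp add: insert_commute)
  next
    case 4
    then have "rainbow_spanned {y, z, x}" using rainbow_spanned_two_classes[OF U(2,3,1)] assms by simp
    then show ?thesis by (simp add: insert_commute)
  next
    case 5
    then show ?thesis using rainbow_spanned_distinct_classes[OF U] by simp
  qed
qed

lemma rainbow_spanned_triple:
  assumes "S \<subseteq> V" "card S = 3"
  shows "rainbow_spanned S"
proof (cases "S \<inter> {a, b} = {}")
  case False
  then obtain s where "s \<in> S" "s \<in> {a, b}" by blast
  moreover have "card (S - {s}) = 2" using \<open>s \<in> S\<close> assms(2) by simp
  ultimately obtain y z where "S - {s} = {y, z}" "S \<subseteq> {a, b, y, z}"
    unfolding card_2_iff by blast
  then show ?thesis
    using rainbow_spanned_ab_pair[of y z] rainbow_spanned_subset assms(1) by blast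
next
  case True
  obtain x y z where "S = {x, y, z}" "x \<noteq> y" "x \<noteq> z" "y \<noteq> z"
    using assms(2) unfolding card_3_iff by blast
  moreover have "x \<in> U" "y \<in> U" "z \<in> U" using calculation True assms(1) by auto
  ultimately show ?thesis using rainbow_spanned_inner_triple by blast
qed

theorem three_rainbow_coloring_col: "three_rainbow_coloring V E col (k + 5)"
  unfolding three_rainbow_coloring_def
  using col_less rainbow_spanned_triple
  unfolding rainbow_spanned_def rainbow_tree_def is_S_tree_def by blast

end

lemma rx3_le: "three_rainbow_coloring V E c k \<Longrightarrow> rx3 V E \<le> k"
  unfolding rx3_def by (rule Least_le) blast

text \<open>The existence of some \<open>S\<close>-tree is needed here: without one, the \<open>LEAST\<close> in
  \<open>steiner_dist\<close> would be taken over the empty set.\<close>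
lemma steiner_dist_ge_2:
  assumes "is_S_tree V E S VT ET" "card S = 3"
  shows "steiner_dist V E S \<ge> 2"
  unfolding steiner_dist_def
proof (rule LeastI2_ex)
  show "\<exists>m VT ET. is_S_tree V E S VT ET \<and> card ET = m" using assms(1) by blast
next
  fix m assume "\<exists>VT ET. is_S_tree V E S VT ET \<and> card ET = m"
  then obtain VT ET where T: "is_S_tree V E S VT ET" "card ET = m" by blast
  then have "S \<subseteq> VT" "finite VT" "card ET + 1 = card VT"
    unfolding is_S_tree_def is_subtree_def by auto
  then have "card S \<le> card ET + 1" by (metis card_mono)
  then show "m \<ge> 2" using T(2) assms(2) by linarith
qed

lemma steiner_dist_le_sdiam3:
  assumes "finite V" "S \<subseteq> V" "card S = 3"
  shows "steiner_dist V E S \<le> sdiam3 V E"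
  unfolding sdiam3_def
proof (rule Max_ge)
  have "finite {S. S \<subseteq> V \<and> card S = 3}" using assms(1) by simp
  then show "finite {steiner_dist V E S |S. S \<subseteq> V \<and> card S = 3}"
    by (rule finite_image_set)
qed (use assms(2,3) in blast)

lemma sdiam3_ge_2:
  assumes "three_rainbow_coloring V E c m" "finite V" "card V \<ge> 3"
  shows "sdiam3 V E \<ge> 2"
proof -
  obtain S where S: "S \<subseteq> V" "card S = 3" using obtain_subset_with_card_n assms(3) by metis
  then obtain VT ET where "is_S_tree V E S VT ET"
    using assms(1) unfolding three_rainbow_coloring_def by blast
  then have "steiner_dist V E S \<ge> 2" using steiner_dist_ge_2 S(2) by blast
  then show ?thesis using steiner_dist_le_sdiam3[OF assms(2) S, of E] by linarith
qed

lemma symp_adj: "symp (adj E)"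
  unfolding adj_def symp_def by (simp add: insert_commute)

lemma irreflp_adj: "simple_graph V E \<Longrightarrow> irreflp (adj E)"
  unfolding simple_graph_def adj_def irreflp_def by fastforce

lemma connected_on_adj:
  assumes "simple_graph V E" "connected_graph V E"
  shows "connected_on (adj E) V"
proof -
  have "restrict_rel (adj E) V = adj E"
    using assms(1) unfolding simple_graph_def restrict_rel_def adj_def by (intro ext) blast
  then show ?thesis using assms(2) unfolding connected_on_def connected_graph_def by simp
qed

lemma P4_free_adj_iff: "P4_free (adj E) V \<longleftrightarrow> \<not> has_induced_P4 V E"
  unfolding P4_free_def has_induced_P4_def adj_def by simp

text \<open>An independent set of a join lies on one side, and is then dominated by any vertex of
  the other side.\<close>
lemma induced_star_of_join:
  assumes "A \<union> B = V" "A \<inter> B = {}" "a \<in> A" "b \<in> B" "\<forall>x\<in>A. \<forall>y\<in>B. {x, y} \<in> E"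
    and "L \<subseteq> V" "card L = r" "\<forall>x\<in>L. \<forall>y\<in>L. x \<noteq> y \<longrightarrow> {x, y} \<notin> E"
  shows "has_induced_star V E r"
proof -
  have "L \<subseteq> A \<or> L \<subseteq> B"
  proof (rule ccontr)
    assume "\<not> (L \<subseteq> A \<or> L \<subseteq> B)"
    then obtain x y where "x \<in> L" "y \<in> L" "x \<in> B" "y \<in> A"
      using assms(1,6) by blast
    moreover have "x \<noteq> y" "{x, y} = {y, x}" using calculation assms(2) by auto
    ultimately show False using assms(5,8) by metis
  qed
  then show ?thesis
  proof
    assume "L \<subseteq> A"
    then have "L \<subseteq> V - {b}" "\<forall>x\<in>L. {b, x} \<in> E"
      using assms(1,2,4,5) by (auto simp: insert_commute)
    then show ?thesis unfolding has_induced_star_def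
      using assms(1,4,7,8) by (intro bexI[of _ b] exI[of _ L]) auto
  next
    assume "L \<subseteq> B"
    then have "L \<subseteq> V - {a}" "\<forall>x\<in>L. {a, x} \<in> E"
      using assms(1-3,5) by auto
    then show ?thesis unfolding has_induced_star_def
      using assms(1,3,7,8) by (intro bexI[of _ a] exI[of _ L]) auto
  qed
qed

lemma join_coloring_of_P4_star_free:
  assumes simple: "simple_graph V E" and "connected_graph V E" "card V \<ge> 2"
    and "\<not> has_induced_P4 V E" "\<not> has_induced_star V E r"
  obtains A B a b cls k where "join_coloring V E A B a b cls k" "k < r"
proof -
  have fin: "finite V" using simple unfolding simple_graph_def by blast
  have P4: "P4_free (adj E) V" using assms(4) P4_free_adj_iff by blast
  obtain A B where AB: "A \<union> B = V" "A \<inter> B = {}" "A \<noteq> {}" "B \<noteq> {}"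
    and join: "\<forall>x\<in>A. \<forall>y\<in>B. {x, y} \<in> E"
    using P4_free_join_decomposition[OF symp_adj irreflp_adj[OF simple] fin P4 assms(3)
        connected_on_adj[OF simple assms(2)]]
    unfolding adj_def by blast
  obtain a b where ab: "a \<in> A" "b \<in> B" using AB(3,4) by blast
  have "finite (V - {a, b})" "P4_free (adj E) (V - {a, b})"
    using fin P4_free_subset[OF P4] by auto
  then obtain cls k t where cover: "clique_cover (adj E) (V - {a, b}) cls k t"
    using P4_free_clique_cover[OF symp_adj irreflp_adj[OF simple]] by blast
  have "k < r"
  proof (rule ccontr)
    assume "\<not> k < r"
    then have "r \<le> k" by simp
    then obtain L where L: "L \<subseteq> V - {a, b}" "card L = r"
      "\<forall>x\<in>L. \<forall>y\<in>L. x \<noteq> y \<longrightarrow> \<not> adj E x y"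
      by (rule clique_cover_independent_subset[OF cover])
    have "has_induced_star V E r"
      using induced_star_of_join[OF AB(1,2) ab join _ L(2)] L(1,3) unfolding adj_def by blast
    then show False using assms(5) by contradiction
  qed
  moreover have "\<forall>x\<in>V - {a, b}. cls x < k"
    and "\<forall>x\<in>V - {a, b}. \<forall>y\<in>V - {a, b}. x \<noteq> y \<longrightarrow> cls x = cls y \<longrightarrow> {x, y} \<in> E"
    using cover unfolding clique_cover_def adj_def by simp_all
  ultimately show thesis
    using simple AB(1,2) ab join by (intro that[of A B a b cls k] join_coloring.intro)
qed

theorem theorem7:
  fixes V :: "'a set" and E :: "'a set set" and r :: nat
  assumes "r \<ge> 3"
    and "simple_graph V E"
    and "connected_graph V E"
    and "card V \<ge> 3"
    and "\<not> has_induced_P4 V E"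
    and "\<not> has_induced_star V E r"
  shows "rx3 V E \<le> sdiam3 V E + r + 3"
proof -
  have "finite V" using assms(2) unfolding simple_graph_def by blast
  have "card V \<ge> 2" using assms(4) by simp
  then obtain A B a b cls k where "join_coloring V E A B a b cls k" "k < r"
    by (rule join_coloring_of_P4_star_free[OF assms(2,3) _ assms(5,6)])
  then interpret join_coloring V E A B a b cls k by simp
  have "rx3 V E \<le> k + 5" using three_rainbow_coloring_col by (rule rx3_le)
  moreover have "sdiam3 V E \<ge> 2"
    using sdiam3_ge_2[OF three_rainbow_coloring_col \<open>finite V\<close> assms(4)] .
  ultimately show ?thesis using \<open>k < r\<close> by linarith
qed

end
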